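(* Let $n\ge2$ and let $D_n$ be the group of even signed permutations of $\{\pm1,\ldots,\pm n\}$. For $\pi\in D_n$ set $\pi(0)=-\pi(2)$, $\mathrm{des}(\pi)=\#\{0\le i<n : \pi(i)>\pi(i+1)\}$ and $\mathrm{ides}(\pi)=\mathrm{des}(\pi^{-1})$. For $\pi$ uniformly random in $D_n$ let $X_{\mathrm{des}}=\mathrm{des}(\pi)$ and $X_{\mathrm{des}+\mathrm{ides}}=\mathrm{des}(\pi)+\mathrm{ides}(\pi)$. Then \[ \mathbb{E}(X_{\mathrm{des}+\mathrm{ides}})=n,\qquad \mathbb{V}(X_{\mathrm{des}+\mathrm{ides}}) = 2\,\mathbb{V}(X_{\mathrm{des}}) + \frac{n}{2n-2}. \]
   Context: A signed permutation is a bijection $\pi$ of $\{\pm1,\ldots,\pm n\}$ with $\pi(-i)=-\pi(i)$, written $[\pi(1),\ldots,\pi(n)]$; it is even if an even number of $\pi(1),\ldots,\pi(n)$ are negative. The convention $\pi(0)=-\pi(2)$ is applied to both $\pi$ and $\pi^{-1}$. *)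

theory Defs
  imports "HOL-Combinatorics.Permutations" Complex_Main
begin

definition signed_perms :: "nat \<Rightarrow> (int \<Rightarrow> int) set" where
  "signed_perms n = {\<pi>. \<pi> permutes ({-int n..int n} - {0}) \<and> (\<forall>i. \<pi> (-i) = - \<pi> i)}"

definition even_signed_perms :: "nat \<Rightarrow> (int \<Rightarrow> int) set" where
  "even_signed_perms n = {\<pi> \<in> signed_perms n. even (card {i \<in> {1..int n}. \<pi> i < 0})}"

definition Dval :: "(int \<Rightarrow> int) \<Rightarrow> int \<Rightarrow> int" where
  "Dval \<pi> i = (if i = 0 then - \<pi> 2 else \<pi> i)"

definition desD :: "nat \<Rightarrow> (int \<Rightarrow> int) \<Rightarrow> nat" where
  "desD n \<pi> = card {i \<in> {0..<int n}. Dval \<pi> i > Dval \<pi> (i + 1)}"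

definition idesD :: "nat \<Rightarrow> (int \<Rightarrow> int) \<Rightarrow> nat" where
  "idesD n \<pi> = desD n (inv \<pi>)"

definition unif_expect :: "'a set \<Rightarrow> ('a \<Rightarrow> real) \<Rightarrow> real" where
  "unif_expect A X = (\<Sum>x\<in>A. X x) / real (card A)"

definition unif_var :: "'a set \<Rightarrow> ('a \<Rightarrow> real) \<Rightarrow> real" where
  "unif_var A X = unif_expect A (\<lambda>x. (X x - unif_expect A X)^2)"

end

theory Submission
  imports Defs
begin

text \<open>Write des pi as the sum of the descent indicators X_i(pi) = [pi(l_i) > pi(i+1)], where
  l_0 = -2 and l_i = i otherwise, and ides pi as the sum of Y_j(pi) = X_j(pi^-1). Right
  multiplication by the simple reflection s_i of D_n exchanges the values at l_i and i+1, so it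
  flips X_i, and E X_i = 1/2. Left multiplication by s_j flips Y_j and leaves X_i unchanged unless
  {pi(l_i), pi(i+1)} = +-{l_j, j+1}, in which case X_i = Y_j. Hence
  E(X_i Y_j) = 1/4 + P_ij/4 with P_ij the probability of that critical event. For n >= 3 the group
  D_n acts transitively on ordered pairs (x, y) with x <> +-y, which gives P_ij = 1/(n(n-1)); for
  n = 2 the critical events are checked by hand. Either way the P_ij sum to n/(n-1), so
  Cov(des, ides) = n/(4(n-1)), and since pi -> pi^-1 is a bijection of D_n, des and ides have the
  same variance.\<close>

section \<open>Signed permutations\<close>

definition signed_points :: "nat \<Rightarrow> int set" where
  "signed_points n = {-int n..int n} - {0}"

definition sign_prod :: "nat \<Rightarrow> (int \<Rightarrow> int) \<Rightarrow> int" where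
  "sign_prod n p = (\<Prod>i\<in>{1..int n}. sgn (p i))"

lemma signed_perms_permutes: "p \<in> signed_perms n \<Longrightarrow> p permutes signed_points n"
  by (simp add: signed_perms_def signed_points_def)

lemma signed_perms_minus: "p \<in> signed_perms n \<Longrightarrow> p (-i) = - p i"
  by (simp add: signed_perms_def)

lemma signed_perms_bij: "p \<in> signed_perms n \<Longrightarrow> bij p"
  using permutes_bij[OF signed_perms_permutes] .

lemma signed_perms_eq_iff: "p \<in> signed_perms n \<Longrightarrow> p x = p y \<longleftrightarrow> x = y"
  using signed_perms_bij by (metis bij_pointE)

lemma signed_perms_zero: "p \<in> signed_perms n \<Longrightarrow> p 0 = 0"
  using signed_perms_minus[of p n 0] by simp

lemma signed_perms_nonzero: "p \<in> signed_perms n \<Longrightarrow> x \<noteq> 0 \<Longrightarrow> p x \<noteq> 0"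
  using signed_perms_zero signed_perms_eq_iff by metis

lemma signed_perms_in_points: "p \<in> signed_perms n \<Longrightarrow> x \<in> signed_points n \<Longrightarrow> p x \<in> signed_points n"
  using permutes_in_image[OF signed_perms_permutes] by blast

lemma signed_perms_inv_apply: "p \<in> signed_perms n \<Longrightarrow> inv p (p x) = x"
  using permutes_inverses(2)[OF signed_perms_permutes] by blast

lemma signed_perms_apply_inv: "p \<in> signed_perms n \<Longrightarrow> p (inv p x) = x"
  using permutes_inverses(1)[OF signed_perms_permutes] by blast

lemma id_signed_perms: "id \<in> signed_perms n"
  by (simp add: signed_perms_def)

lemma signed_perms_comp: "p \<in> signed_perms n \<Longrightarrow> q \<in> signed_perms n \<Longrightarrow> p \<circ> q \<in> signed_perms n"
  unfolding signed_perms_def by (auto intro: permutes_compose)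

lemma signed_perms_inv:
  assumes "p \<in> signed_perms n"
  shows "inv p \<in> signed_perms n"
proof -
  have "inv p (-i) = - inv p i" for i
    using signed_perms_minus[OF assms, of "inv p i"] signed_perms_apply_inv[OF assms]
      signed_perms_inv_apply[OF assms] by metis
  thus ?thesis
    using permutes_inv[OF signed_perms_permutes[OF assms]]
    by (simp add: signed_perms_def signed_points_def)
qed

lemma involution_permutes:
  assumes "\<And>x. f (f x) = x" "\<And>x. x \<notin> S \<Longrightarrow> f x = x"
  shows "f permutes S"
  unfolding permutes_def using assms by metis

lemma involution_bij_betw:
  "(\<And>x. x \<in> A \<Longrightarrow> f x \<in> A) \<Longrightarrow> (\<And>x. x \<in> A \<Longrightarrow> f (f x) = x) \<Longrightarrow> bij_betw f A A"
  by (rule bij_betw_byWitness[where f'=f]) auto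

lemma sign_prod_eq_power:
  assumes "p \<in> signed_perms n"
  shows "sign_prod n p = (-1) ^ card {i \<in> {1..int n}. p i < 0}"
proof -
  have "sign_prod n p = (\<Prod>i\<in>{1..int n}. if p i < 0 then -1 else 1)"
    unfolding sign_prod_def
    by (rule prod.cong) (use signed_perms_nonzero[OF assms] in \<open>auto simp: sgn_if\<close>)
  also have "\<dots> = (\<Prod>i\<in>{i \<in> {1..int n}. p i < 0}. -1)"
    by (subst prod.If_cases) (auto simp: Int_def)
  finally show ?thesis by simp
qed

lemma even_signed_perms_iff:
  "p \<in> even_signed_perms n \<longleftrightarrow> p \<in> signed_perms n \<and> sign_prod n p = 1"
proof -
  have "p \<in> signed_perms n \<Longrightarrow> even (card {i \<in> {1..int n}. p i < 0}) \<longleftrightarrow> sign_prod n p = 1"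
    by (simp add: sign_prod_eq_power minus_one_power_iff)
  thus ?thesis unfolding even_signed_perms_def by blast
qed

lemma even_signed_perms_signed_perms: "p \<in> even_signed_perms n \<Longrightarrow> p \<in> signed_perms n"
  by (simp add: even_signed_perms_iff)

lemma signed_perms_abs_bij_betw:
  assumes q: "q \<in> signed_perms n"
  shows "bij_betw (\<lambda>i. \<bar>q i\<bar>) {1..int n} {1..int n}"
proof -
  have sub: "(\<lambda>i. \<bar>q i\<bar>) ` {1..int n} \<subseteq> {1..int n}"
    using signed_perms_in_points[OF q] by (fastforce simp: signed_points_def)
  have inj: "inj_on (\<lambda>i. \<bar>q i\<bar>) {1..int n}"
  proof
    fix i j assume ij: "i \<in> {1..int n}" "j \<in> {1..int n}" "\<bar>q i\<bar> = \<bar>q j\<bar>"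
    hence "q i = q j \<or> q i = q (-j)" using signed_perms_minus[OF q] by (metis abs_eq_iff)
    hence "i = j \<or> i = -j" using signed_perms_eq_iff[OF q] by blast
    thus "i = j" using ij by auto
  qed
  show ?thesis
    using endo_inj_surj[OF _ sub inj] inj by (simp add: bij_betw_def)
qed

text \<open>The sign of pi(q(i)) is the sign of q(i) times that of pi(|q(i)|), and i -> |q(i)| permutes
  {1..n}: this makes the sign product a homomorphism.\<close>

lemma sign_prod_comp:
  assumes p: "p \<in> signed_perms n" and q: "q \<in> signed_perms n"
  shows "sign_prod n (p \<circ> q) = sign_prod n p * sign_prod n q"
proof -
  have sgn_comp: "sgn (p (q i)) = sgn (q i) * sgn (p \<bar>q i\<bar>)" for i
  proof (cases "q i < 0")
    case True
    hence "p (q i) = - p \<bar>q i\<bar>" using signed_perms_minus[OF p] by (metis abs_of_neg minus_minus)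
    thus ?thesis using True by (simp add: sgn_minus)
  next
    case False
    thus ?thesis by (cases "q i = 0") (auto simp: signed_perms_zero[OF p])
  qed
  have "sign_prod n (p \<circ> q) = sign_prod n q * (\<Prod>i\<in>{1..int n}. sgn (p \<bar>q i\<bar>))"
    by (simp add: sign_prod_def sgn_comp prod.distrib)
  also have "(\<Prod>i\<in>{1..int n}. sgn (p \<bar>q i\<bar>)) = sign_prod n p"
    unfolding sign_prod_def
    using prod.reindex_bij_betw[OF signed_perms_abs_bij_betw[OF q], of "\<lambda>k. sgn (p k)"] by simp
  finally show ?thesis by (simp add: comp_def mult.commute)
qed

lemma id_even_signed_perms: "id \<in> even_signed_perms n"
  by (simp add: even_signed_perms_iff id_signed_perms sign_prod_def)

lemma even_signed_perms_comp:
  "p \<in> even_signed_perms n \<Longrightarrow> q \<in> even_signed_perms n \<Longrightarrow> p \<circ> q \<in> even_signed_perms n"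
  by (simp add: even_signed_perms_iff signed_perms_comp sign_prod_comp)

lemma even_signed_perms_inv:
  assumes "p \<in> even_signed_perms n"
  shows "inv p \<in> even_signed_perms n"
proof -
  have p: "p \<in> signed_perms n" "sign_prod n p = 1" using assms by (auto simp: even_signed_perms_iff)
  have "sign_prod n (p \<circ> inv p) = 1"
    using permutes_inv_o(1)[OF signed_perms_permutes[OF p(1)]] id_even_signed_perms
    by (simp add: even_signed_perms_iff)
  hence "sign_prod n (inv p) = 1" using sign_prod_comp[OF p(1) signed_perms_inv[OF p(1)]] p(2) by simp
  thus ?thesis using signed_perms_inv[OF p(1)] by (simp add: even_signed_perms_iff)
qed

lemma finite_even_signed_perms: "finite (even_signed_perms n)"
proof (rule finite_subset)
  show "even_signed_perms n \<subseteq> {p. p permutes signed_points n}"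
    using even_signed_perms_signed_perms signed_perms_permutes by blast
  show "finite {p. p permutes signed_points n}"
    by (rule finite_permutations) (simp add: signed_points_def)
qed

section \<open>Descent indicators and simple reflections\<close>

text \<open>For a signed permutation, Dval pi i = pi (left_pos i), since pi(-2) = -pi(2).\<close>

definition left_pos :: "int \<Rightarrow> int" where
  "left_pos i = (if i = 0 then -2 else i)"

definition desc_ind :: "(int \<Rightarrow> int) \<Rightarrow> int \<Rightarrow> real" where
  "desc_ind p i = (if p (left_pos i) > p (i + 1) then 1 else 0)"

definition simple_refl :: "int \<Rightarrow> int \<Rightarrow> int" where
  "simple_refl j z =
    (if z = left_pos j then j + 1 else if z = j + 1 then left_pos j
     else if z = - left_pos j then -(j + 1) else if z = -(j + 1) then - left_pos j else z)"

definition critical_pair :: "int \<Rightarrow> int \<Rightarrow> int \<Rightarrow> bool" where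
  "critical_pair j x y \<longleftrightarrow> {x, y} = {left_pos j, j + 1} \<or> {x, y} = {- left_pos j, -(j + 1)}"

lemma left_pos_less: "0 \<le> i \<Longrightarrow> left_pos i < i + 1"
  by (simp add: left_pos_def)

lemma simple_refl_involution: "0 \<le> j \<Longrightarrow> simple_refl j (simple_refl j z) = z"
  by (auto simp: simple_refl_def left_pos_def)

lemma simple_refl_left_pos: "0 \<le> j \<Longrightarrow> simple_refl j (left_pos j) = j + 1"
  by (auto simp: simple_refl_def left_pos_def)

lemma simple_refl_succ: "0 \<le> j \<Longrightarrow> simple_refl j (j + 1) = left_pos j"
  by (auto simp: simple_refl_def left_pos_def)

lemma simple_refl_minus: "0 \<le> j \<Longrightarrow> simple_refl j (-z) = - simple_refl j z"
  by (auto simp: simple_refl_def left_pos_def)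

lemma inv_simple_refl: "0 \<le> j \<Longrightarrow> inv (simple_refl j) = simple_refl j"
  by (rule inv_unique_comp) (auto simp: fun_eq_iff simple_refl_involution)

lemma bij_simple_refl: "0 \<le> j \<Longrightarrow> bij (simple_refl j)"
  by (metis bij_betw_imageI inj_def simple_refl_involution surj_def)

lemma simple_refl_even_signed_perms:
  assumes "2 \<le> n" "0 \<le> j" "j < int n"
  shows "simple_refl j \<in> even_signed_perms n"
proof -
  have "simple_refl j permutes signed_points n"
    by (rule involution_permutes)
      (use assms in \<open>auto simp: simple_refl_involution simple_refl_def left_pos_def signed_points_def\<close>)
  hence sp: "simple_refl j \<in> signed_perms n"
    using simple_refl_minus assms by (auto simp: signed_perms_def signed_points_def)
  have "{i \<in> {1..int n}. simple_refl j i < 0} = (if j = 0 then {1, 2} else {})"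
    using assms by (auto simp: simple_refl_def left_pos_def)
  thus ?thesis using sp by (simp add: even_signed_perms_def)
qed

lemma simple_refl_zero:
  "simple_refl 0 z =
    (if z = -2 then 1 else if z = 1 then -2 else if z = 2 then -1 else if z = -1 then 2 else z)"
  by (simp add: simple_refl_def left_pos_def)

lemma simple_refl_pos:
  "0 < j \<Longrightarrow> simple_refl j z =
    (if z = j then j + 1 else if z = j + 1 then j
     else if z = -j then -j - 1 else if z = -j - 1 then -j else z)"
  by (auto simp: simple_refl_def left_pos_def)

lemma critical_pair_zero:
  "critical_pair 0 x y \<longleftrightarrow>
    (x = -2 \<and> y = 1) \<or> (x = 1 \<and> y = -2) \<or> (x = 2 \<and> y = -1) \<or> (x = -1 \<and> y = 2)"
  by (auto simp: critical_pair_def left_pos_def doubleton_eq_iff)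

lemma critical_pair_pos:
  "0 < j \<Longrightarrow> critical_pair j x y \<longleftrightarrow>
    (x = j \<and> y = j + 1) \<or> (x = j + 1 \<and> y = j) \<or> (x = -j \<and> y = -j - 1) \<or> (x = -j - 1 \<and> y = -j)"
  by (auto simp: critical_pair_def left_pos_def doubleton_eq_iff)

lemma simple_refl_less_iff:
  assumes "0 \<le> j" "x \<noteq> 0" "y \<noteq> 0" "x \<noteq> y" "x \<noteq> -y" "\<not> critical_pair j x y"
  shows "simple_refl j x < simple_refl j y \<longleftrightarrow> x < y"
proof (cases "j = 0")
  case True
  have "x = -2 \<or> x = 1 \<or> x = 2 \<or> x = -1 \<or> (x \<noteq> -2 \<and> x \<noteq> 1 \<and> x \<noteq> 2 \<and> x \<noteq> -1)"
    "y = -2 \<or> y = 1 \<or> y = 2 \<or> y = -1 \<or> (y \<noteq> -2 \<and> y \<noteq> 1 \<and> y \<noteq> 2 \<and> y \<noteq> -1)"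
    by blast+
  thus ?thesis
    using assms(2-6) unfolding True simple_refl_zero critical_pair_zero
    by (elim disjE conjE) (simp_all, (rule iffI; linarith)+)
next
  case False
  hence j: "0 < j" using assms(1) by simp
  have "x = j \<or> x = j + 1 \<or> x = -j \<or> x = -j - 1 \<or> (x \<noteq> j \<and> x \<noteq> j + 1 \<and> x \<noteq> -j \<and> x \<noteq> -j - 1)"
    "y = j \<or> y = j + 1 \<or> y = -j \<or> y = -j - 1 \<or> (y \<noteq> j \<and> y \<noteq> j + 1 \<and> y \<noteq> -j \<and> y \<noteq> -j - 1)"
    by blast+
  thus ?thesis
    using assms(4-6) j unfolding simple_refl_pos[OF j] critical_pair_pos[OF j]
    by (elim disjE conjE) (simp_all, (rule iffI; linarith)+)
qed

lemma critical_pair_simple_refl: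
  assumes "0 \<le> j"
  shows "critical_pair j (simple_refl j x) (simple_refl j y) \<longleftrightarrow> critical_pair j x y"
proof (cases "j = 0")
  case True
  have "x = -2 \<or> x = 1 \<or> x = 2 \<or> x = -1 \<or> (x \<noteq> -2 \<and> x \<noteq> 1 \<and> x \<noteq> 2 \<and> x \<noteq> -1)"
    "y = -2 \<or> y = 1 \<or> y = 2 \<or> y = -1 \<or> (y \<noteq> -2 \<and> y \<noteq> 1 \<and> y \<noteq> 2 \<and> y \<noteq> -1)"
    by blast+
  thus ?thesis unfolding True simple_refl_zero critical_pair_zero by (elim disjE conjE) simp_all
next
  case False
  hence j: "0 < j" using assms by simp
  have "x = j \<or> x = j + 1 \<or> x = -j \<or> x = -j - 1 \<or> (x \<noteq> j \<and> x \<noteq> j + 1 \<and> x \<noteq> -j \<and> x \<noteq> -j - 1)"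
    "y = j \<or> y = j + 1 \<or> y = -j \<or> y = -j - 1 \<or> (y \<noteq> j \<and> y \<noteq> j + 1 \<and> y \<noteq> -j \<and> y \<noteq> -j - 1)"
    by blast+
  thus ?thesis
    using j unfolding simple_refl_pos[OF j] critical_pair_pos[OF j] by (elim disjE conjE) simp_all
qed

lemma critical_pair_commute: "critical_pair j x y \<longleftrightarrow> critical_pair j y x"
  by (auto simp: critical_pair_def doubleton_eq_iff)

lemma critical_pair_inv_iff:
  assumes "p \<in> signed_perms n"
  shows "critical_pair i (inv p (left_pos j)) (inv p (j + 1))
    \<longleftrightarrow> critical_pair j (p (left_pos i)) (p (i + 1))"
proof -
  have swap: "{inv p a, inv p b} = {c, d} \<longleftrightarrow> {a, b} = {p c, p d}" for a b c d
    using signed_perms_inv_apply[OF assms] signed_perms_apply_inv[OF assms]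
    by (auto simp: doubleton_eq_iff)
  have "{- left_pos j, -(j + 1)} = {p (left_pos i), p (i + 1)}
      \<longleftrightarrow> {left_pos j, j + 1} = {p (- left_pos i), p (-(i + 1))}"
    unfolding signed_perms_minus[OF assms] by (auto simp: doubleton_eq_iff)
  thus ?thesis unfolding critical_pair_def swap by metis
qed

lemma desD_eq_sum_desc_ind:
  assumes "p \<in> signed_perms n"
  shows "real (desD n p) = (\<Sum>i\<in>{0..<int n}. desc_ind p i)"
proof -
  have "{i \<in> {0..<int n}. Dval p i > Dval p (i + 1)} = {i \<in> {0..<int n}. p (left_pos i) > p (i + 1)}"
    using signed_perms_minus[OF assms, of 2] by (auto simp: Dval_def left_pos_def)
  hence "real (desD n p) = (\<Sum>i\<in>{i \<in> {0..<int n}. p (left_pos i) > p (i + 1)}. 1)"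
    by (simp add: desD_def)
  also have "\<dots> = (\<Sum>i\<in>{0..<int n}. desc_ind p i)"
    by (subst sum.inter_filter) (auto simp: desc_ind_def)
  finally show ?thesis .
qed

lemma desc_ind_comp_simple_refl:
  assumes "p \<in> signed_perms n" "0 \<le> i"
  shows "desc_ind (p \<circ> simple_refl i) i = 1 - desc_ind p i"
proof -
  have "p (left_pos i) \<noteq> p (i + 1)"
    using signed_perms_eq_iff[OF assms(1)] left_pos_less[OF assms(2)] by simp
  thus ?thesis using assms by (auto simp: desc_ind_def simple_refl_left_pos simple_refl_succ)
qed

lemma desc_ind_simple_refl_comp:
  assumes "p \<in> signed_perms n" "0 \<le> i" "0 \<le> j"
    and "\<not> critical_pair j (p (left_pos i)) (p (i + 1))"
  shows "desc_ind (simple_refl j \<circ> p) i = desc_ind p i"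
proof -
  have "p (i + 1) \<noteq> 0" "p (left_pos i) \<noteq> 0"
    using signed_perms_nonzero[OF assms(1)] assms(2) by (auto simp: left_pos_def)
  moreover have "p (i + 1) \<noteq> p (left_pos i)"
    using left_pos_less[OF assms(2)] by (simp add: signed_perms_eq_iff[OF assms(1)])
  moreover have "p (i + 1) \<noteq> - p (left_pos i)"
    unfolding signed_perms_minus[OF assms(1), symmetric] signed_perms_eq_iff[OF assms(1)]
    using assms(2) by (simp add: left_pos_def)
  moreover have "\<not> critical_pair j (p (i + 1)) (p (left_pos i))"
    using assms(4) critical_pair_commute by blast
  ultimately show ?thesis using simple_refl_less_iff[OF assms(3)] by (simp add: desc_ind_def)
qed

text \<open>On a critical pair the i-th descent of pi and the j-th descent of its inverse are read off
  the same two values.\<close>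

lemma desc_ind_eq_inv_if_critical:
  assumes "p \<in> signed_perms n" "0 \<le> i" "0 \<le> j"
    and "critical_pair j (p (left_pos i)) (p (i + 1))"
  shows "desc_ind p i = desc_ind (inv p) j"
proof -
  have inv_eq: "inv p y = x \<longleftrightarrow> p x = y" for x y
    using signed_perms_inv_apply[OF assms(1)] signed_perms_apply_inv[OF assms(1)] by metis
  note less = left_pos_less[OF assms(2)] left_pos_less[OF assms(3)]
  from assms(4) consider
      "p (left_pos i) = left_pos j" "p (i + 1) = j + 1"
    | "p (left_pos i) = j + 1" "p (i + 1) = left_pos j"
    | "p (left_pos i) = - left_pos j" "p (i + 1) = -(j + 1)"
    | "p (left_pos i) = -(j + 1)" "p (i + 1) = - left_pos j"
    by (auto simp: critical_pair_def doubleton_eq_iff)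
  thus ?thesis
  proof cases
    case 1
    hence "inv p (left_pos j) = left_pos i" "inv p (j + 1) = i + 1" using inv_eq by metis+
    thus ?thesis using 1 less by (simp add: desc_ind_def)
  next
    case 2
    hence "inv p (left_pos j) = i + 1" "inv p (j + 1) = left_pos i" using inv_eq by metis+
    thus ?thesis using 2 less by (simp add: desc_ind_def)
  next
    case 3
    hence "p (- left_pos i) = left_pos j" "p (-(i + 1)) = j + 1"
      using signed_perms_minus[OF assms(1)] by (metis minus_minus)+
    hence "inv p (left_pos j) = - left_pos i" "inv p (j + 1) = -(i + 1)" using inv_eq by metis+
    thus ?thesis using 3 less by (simp add: desc_ind_def)
  next
    case 4
    hence "p (-(i + 1)) = left_pos j" "p (- left_pos i) = j + 1"
      using signed_perms_minus[OF assms(1)] by (metis minus_minus)+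
    hence "inv p (left_pos j) = -(i + 1)" "inv p (j + 1) = - left_pos i" using inv_eq by metis+
    thus ?thesis using 4 less by (simp add: desc_ind_def)
  qed
qed

section \<open>Expected descents and the mixed moment\<close>

lemma sum_mult_eq_half_if_flipped:
  fixes f h :: "'a \<Rightarrow> real"
  assumes "bij_betw g A A" "\<And>x. x \<in> A \<Longrightarrow> f (g x) = 1 - f x" "\<And>x. x \<in> A \<Longrightarrow> h (g x) = h x"
  shows "(\<Sum>x\<in>A. f x * h x) = (\<Sum>x\<in>A. h x) / 2"
proof -
  have "(\<Sum>x\<in>A. f x * h x) = (\<Sum>x\<in>A. f (g x) * h (g x))"
    using sum.reindex_bij_betw[OF assms(1), of "\<lambda>x. f x * h x"] by simp
  also have "\<dots> = (\<Sum>x\<in>A. h x - f x * h x)"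
    using assms(2,3) by (intro sum.cong) (simp_all add: left_diff_distrib)
  finally show ?thesis by (simp add: sum_subtractf)
qed

lemma sum_eq_half_card_if_flipped:
  fixes f :: "'a \<Rightarrow> real"
  assumes "bij_betw g A A" "\<And>x. x \<in> A \<Longrightarrow> f (g x) = 1 - f x"
  shows "(\<Sum>x\<in>A. f x) = real (card A) / 2"
  using sum_mult_eq_half_if_flipped[of g A f "\<lambda>_. 1"] assms by simp

lemma bij_betw_comp_simple_refl:
  assumes "2 \<le> n" "0 \<le> i" "i < int n"
  shows "bij_betw (\<lambda>p. p \<circ> simple_refl i) (even_signed_perms n) (even_signed_perms n)"
  using even_signed_perms_comp[OF _ simple_refl_even_signed_perms[OF assms]]
    simple_refl_involution[OF assms(2)]
  by (intro involution_bij_betw) (auto simp: fun_eq_iff)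

lemma sum_desc_ind:
  assumes "2 \<le> n" "0 \<le> i" "i < int n"
  shows "(\<Sum>p\<in>even_signed_perms n. desc_ind p i) = real (card (even_signed_perms n)) / 2"
  using bij_betw_comp_simple_refl[OF assms] desc_ind_comp_simple_refl[OF _ assms(2)]
    even_signed_perms_signed_perms
  by (intro sum_eq_half_card_if_flipped) blast+

definition critical_perms :: "nat \<Rightarrow> int \<Rightarrow> int \<Rightarrow> (int \<Rightarrow> int) set" where
  "critical_perms n i j = {p \<in> even_signed_perms n. critical_pair j (p (left_pos i)) (p (i + 1))}"

lemma sum_desc_ind_mult_inv:
  assumes n: "2 \<le> n" and i: "0 \<le> i" "i < int n" and j: "0 \<le> j" "j < int n"
  shows "(\<Sum>p\<in>even_signed_perms n. desc_ind p i * desc_ind (inv p) j)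
    = real (card (even_signed_perms n)) / 4 + real (card (critical_perms n i j)) / 4"
proof -
  define G where "G = even_signed_perms n"
  define C where "C = critical_perms n i j"
  define X where "X p = desc_ind p i" for p
  define Y where "Y p = desc_ind (inv p) j" for p
  have signed: "p \<in> signed_perms n" if "p \<in> G" for p
    using that even_signed_perms_signed_perms G_def by blast
  have C_sub: "C \<subseteq> G" by (auto simp: C_def G_def critical_perms_def)
  have fin: "finite C" "finite (G - C)"
    using finite_even_signed_perms by (auto simp: C_def G_def critical_perms_def)
  have X_right: "X (p \<circ> simple_refl i) = 1 - X p" if "p \<in> G" for p
    using desc_ind_comp_simple_refl[OF signed[OF that] i(1)] by (simp add: X_def)
  have C_right: "p \<circ> simple_refl i \<in> C \<longleftrightarrow> p \<in> C" if "p \<in> G" for p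
    using that bij_betw_comp_simple_refl[OF n i] critical_pair_commute
    by (auto simp: C_def G_def critical_perms_def bij_betw_def simple_refl_left_pos[OF i(1)]
        simple_refl_succ[OF i(1)])
  have C_left: "simple_refl j \<circ> p \<in> C \<longleftrightarrow> p \<in> C" if "p \<in> G" for p
    using that even_signed_perms_comp[OF simple_refl_even_signed_perms[OF n j]]
    by (auto simp: C_def G_def critical_perms_def critical_pair_simple_refl[OF j(1)])
  have bij_right: "bij_betw (\<lambda>p. p \<circ> simple_refl i) A A" if "A = C \<or> A = G - C" for A
    using that C_right even_signed_perms_comp[OF _ simple_refl_even_signed_perms[OF n i]]
      simple_refl_involution[OF i(1)] C_sub
    by (intro involution_bij_betw) (auto simp: fun_eq_iff G_def)
  have bij_left: "bij_betw (\<lambda>p. simple_refl j \<circ> p) (G - C) (G - C)"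
    using C_left even_signed_perms_comp[OF simple_refl_even_signed_perms[OF n j]]
      simple_refl_involution[OF j(1)]
    by (intro involution_bij_betw) (auto simp: fun_eq_iff G_def)
  txt \<open>Off the critical set, X and Y are flipped independently by s_i on the right and s_j on
    the left.\<close>
  have Y_right: "Y (p \<circ> simple_refl i) = Y p" if "p \<in> G - C" for p
  proof -
    have "\<not> critical_pair i (inv p (left_pos j)) (inv p (j + 1))"
      using that critical_pair_inv_iff[OF signed] by (auto simp: C_def G_def critical_perms_def)
    thus ?thesis
      using that desc_ind_simple_refl_comp[OF signed_perms_inv[OF signed] j(1) i(1)]
        o_inv_distrib[OF signed_perms_bij[OF signed] bij_simple_refl[OF i(1)]]
      by (simp add: Y_def inv_simple_refl[OF i(1)])
  qed
  have Y_left: "Y (simple_refl j \<circ> p) = 1 - Y p" if "p \<in> G" for p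
    using desc_ind_comp_simple_refl[OF signed_perms_inv[OF signed[OF that]] j(1)]
      o_inv_distrib[OF bij_simple_refl[OF j(1)] signed_perms_bij[OF signed[OF that]]]
    by (simp add: Y_def inv_simple_refl[OF j(1)])
  have off_critical: "(\<Sum>p\<in>G - C. X p * Y p) = real (card (G - C)) / 4"
  proof -
    have "(\<Sum>p\<in>G - C. X p * Y p) = (\<Sum>p\<in>G - C. Y p) / 2"
      by (rule sum_mult_eq_half_if_flipped[OF bij_right]) (auto simp: X_right Y_right)
    also have "(\<Sum>p\<in>G - C. Y p) = real (card (G - C)) / 2"
      by (rule sum_eq_half_card_if_flipped[OF bij_left]) (simp add: Y_left)
    finally show ?thesis by simp
  qed
  have on_critical: "(\<Sum>p\<in>C. X p * Y p) = real (card C) / 2"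
  proof -
    have "X p = Y p" if "p \<in> C" for p
      using that desc_ind_eq_inv_if_critical[OF signed i(1) j(1)]
      by (auto simp: X_def Y_def C_def G_def critical_perms_def)
    hence "X p * Y p = X p" if "p \<in> C" for p
      using that by (metis X_def desc_ind_def mult_cancel_left1 mult_zero_left)
    hence "(\<Sum>p\<in>C. X p * Y p) = (\<Sum>p\<in>C. X p)" by (intro sum.cong) auto
    also have "\<dots> = real (card C) / 2"
      using C_sub by (intro sum_eq_half_card_if_flipped[OF bij_right]) (auto simp: X_right)
    finally show ?thesis .
  qed
  have "(\<Sum>p\<in>G. X p * Y p) = (\<Sum>p\<in>G - C. X p * Y p) + (\<Sum>p\<in>C. X p * Y p)"
    using sum.subset_diff[OF C_sub] finite_even_signed_perms by (simp add: G_def)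
  moreover have "card G = card (G - C) + card C"
    using card_Diff_subset[OF fin(1) C_sub] card_mono[OF _ C_sub] finite_even_signed_perms
    by (simp add: G_def)
  ultimately show ?thesis
    using off_critical on_critical by (simp add: G_def C_def X_def Y_def field_simps)
qed

section \<open>Counting critical permutations\<close>

definition signed_swap :: "int \<Rightarrow> int \<Rightarrow> int \<Rightarrow> int" where
  "signed_swap a b z =
    (if z = a then b else if z = b then a else if z = -a then -b else if z = -b then -a else z)"

definition negate_if :: "bool \<Rightarrow> int \<Rightarrow> int \<Rightarrow> int" where
  "negate_if c k z = (if c \<and> z = k then -k else if c \<and> z = -k then k else z)"

lemma signed_swap_involution: "1 \<le> a \<Longrightarrow> 1 \<le> b \<Longrightarrow> signed_swap a b (signed_swap a b z) = z"
  by (auto simp: signed_swap_def)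

lemma signed_swap_minus: "1 \<le> a \<Longrightarrow> 1 \<le> b \<Longrightarrow> signed_swap a b (-z) = - signed_swap a b z"
  by (auto simp: signed_swap_def)

lemma signed_swap_even_signed_perms:
  assumes "a \<in> {1..int n}" "b \<in> {1..int n}"
  shows "signed_swap a b \<in> even_signed_perms n"
proof -
  have "signed_swap a b permutes signed_points n"
    using assms signed_swap_involution[of a b]
    by (intro involution_permutes) (auto simp: signed_swap_def signed_points_def)
  hence "signed_swap a b \<in> signed_perms n"
    using assms signed_swap_minus[of a b] by (simp add: signed_perms_def signed_points_def)
  moreover have "{i \<in> {1..int n}. signed_swap a b i < 0} = {}"
    using assms by (auto simp: signed_swap_def)
  hence "even (card {i \<in> {1..int n}. signed_swap a b i < 0})" by (metis card.empty even_zero)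
  ultimately show ?thesis unfolding even_signed_perms_def by blast
qed

lemma negate_if_signed_perms:
  assumes "k \<in> {1..int n}"
  shows "negate_if c k \<in> signed_perms n" "sign_prod n (negate_if c k) = (if c then -1 else 1)"
proof -
  have "negate_if c k permutes signed_points n"
    using assms by (intro involution_permutes) (auto simp: negate_if_def signed_points_def)
  thus signed: "negate_if c k \<in> signed_perms n"
    using assms by (auto simp: signed_perms_def signed_points_def negate_if_def)
  have "{i \<in> {1..int n}. negate_if c k i < 0} = (if c then {k} else {})"
    using assms by (auto simp: negate_if_def)
  thus "sign_prod n (negate_if c k) = (if c then -1 else 1)"
    using sign_prod_eq_power[OF signed] by simp
qed

text \<open>The point 3 absorbs the sign change needed to keep the permutation even; this is where
  n \<ge> 3 enters.\<close>

lemma exists_even_signed_perm_with_signs: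
  assumes "3 \<le> n"
  shows "\<exists>f\<in>even_signed_perms n. f 1 = (if b then -1 else 1) \<and> f 2 = (if c then -2 else 2)"
proof
  define f where "f = negate_if b 1 \<circ> negate_if c 2 \<circ> negate_if (b \<noteq> c) 3"
  have k: "(1::int) \<in> {1..int n}" "(2::int) \<in> {1..int n}" "(3::int) \<in> {1..int n}"
    using assms by auto
  show "f \<in> even_signed_perms n"
    using negate_if_signed_perms[OF k(1)] negate_if_signed_perms[OF k(2)]
      negate_if_signed_perms[OF k(3)]
    by (simp add: f_def even_signed_perms_iff signed_perms_comp sign_prod_comp)
  show "f 1 = (if b then -1 else 1) \<and> f 2 = (if c then -2 else 2)"
    by (simp add: f_def negate_if_def)
qed

lemma exists_even_signed_perm_with_abs_values:
  assumes "a \<in> {1..int n}" "b \<in> {1..int n}" "a \<noteq> b"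
  shows "\<exists>h\<in>even_signed_perms n. h 1 = a \<and> h 2 = b"
proof
  define c where "c = (if b = 1 then a else b)"
  have c: "c \<in> {1..int n}" "c \<noteq> 1" "signed_swap 1 a c = b"
    using assms by (auto simp: c_def signed_swap_def)
  define h where "h = signed_swap 1 a \<circ> signed_swap 2 c"
  have "(1::int) \<in> {1..int n}" "(2::int) \<in> {1..int n}" using assms by auto
  thus "h \<in> even_signed_perms n"
    unfolding h_def using assms(1) c(1) by (intro even_signed_perms_comp signed_swap_even_signed_perms)
  show "h 1 = a \<and> h 2 = b"
    using c by (simp add: h_def signed_swap_def)
qed

lemma even_signed_perms_pair_transitive:
  assumes n: "3 \<le> n" and x: "x \<in> signed_points n" and y: "y \<in> signed_points n"
    and xy: "x \<noteq> y" "x \<noteq> -y"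
  shows "\<exists>h\<in>even_signed_perms n. h 1 = x \<and> h 2 = y"
proof -
  have "\<bar>x\<bar> \<in> {1..int n}" "\<bar>y\<bar> \<in> {1..int n}" "\<bar>x\<bar> \<noteq> \<bar>y\<bar>"
    using x y xy by (auto simp: signed_points_def abs_if split: if_splits)
  then obtain g where g: "g \<in> even_signed_perms n" "g 1 = \<bar>x\<bar>" "g 2 = \<bar>y\<bar>"
    using exists_even_signed_perm_with_abs_values by blast
  obtain f where f: "f \<in> even_signed_perms n"
      "f 1 = (if x < 0 then -1 else 1)" "f 2 = (if y < 0 then -2 else 2)"
    using exists_even_signed_perm_with_signs[OF n] by blast
  have "(g \<circ> f) 1 = x" "(g \<circ> f) 2 = y"
    using g f signed_perms_minus[OF even_signed_perms_signed_perms[OF g(1)]] by auto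
  thus ?thesis using even_signed_perms_comp[OF g(1) f(1)] by blast
qed

definition point_pairs :: "nat \<Rightarrow> (int \<times> int) set" where
  "point_pairs n = {(x, y). x \<in> signed_points n \<and> y \<in> signed_points n \<and> x \<noteq> y \<and> x \<noteq> -y}"

definition pair_fiber :: "nat \<Rightarrow> int \<Rightarrow> int \<Rightarrow> int \<times> int \<Rightarrow> (int \<Rightarrow> int) set" where
  "pair_fiber n u v t = {p \<in> even_signed_perms n. (p u, p v) = t}"

lemma card_signed_points: "card (signed_points n) = 2 * n"
proof -
  have "card ({-int n..int n} - {0}) = card {-int n..int n} - 1"
    by (subst card_Diff_singleton) auto
  thus ?thesis by (simp add: signed_points_def)
qed

lemma card_point_pairs: "card (point_pairs n) = 2 * n * (2 * n - 2)"
proof -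
  have pairs: "point_pairs n = Sigma (signed_points n) (\<lambda>x. signed_points n - {x, -x})"
    by (auto simp: point_pairs_def)
  have "card (signed_points n - {x, -x}) = 2 * n - 2" if "x \<in> signed_points n" for x
  proof -
    have "{x, -x} \<subseteq> signed_points n" "card {x, -x} = 2" using that by (auto simp: signed_points_def)
    thus ?thesis using card_signed_points card_Diff_subset[of "{x, -x}" "signed_points n"] by simp
  qed
  hence "card (point_pairs n) = (\<Sum>x\<in>signed_points n. 2 * n - 2)"
    unfolding pairs by (subst card_SigmaI) (auto simp: signed_points_def)
  thus ?thesis using card_signed_points by simp
qed

lemma finite_point_pairs: "finite (point_pairs n)"
proof (rule finite_subset)
  show "point_pairs n \<subseteq> signed_points n \<times> signed_points n" by (auto simp: point_pairs_def)
qed (simp add: signed_points_def)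

lemma card_pair_fiber_eq:
  assumes n: "3 \<le> n" and t: "(x, y) \<in> point_pairs n" and t': "(x', y') \<in> point_pairs n"
  shows "card (pair_fiber n u v (x, y)) = card (pair_fiber n u v (x', y'))"
proof -
  obtain h where h: "h \<in> even_signed_perms n" "h 1 = x" "h 2 = y"
    using even_signed_perms_pair_transitive[OF n] t by (auto simp: point_pairs_def)
  obtain h' where h': "h' \<in> even_signed_perms n" "h' 1 = x'" "h' 2 = y'"
    using even_signed_perms_pair_transitive[OF n] t' by (auto simp: point_pairs_def)
  define g where "g = h' \<circ> inv h"
  have g: "g \<in> even_signed_perms n" unfolding g_def by (intro even_signed_perms_comp even_signed_perms_inv h' h)
  have signed: "g \<in> signed_perms n" using even_signed_perms_signed_perms[OF g] .
  have "g x = x'" "g y = y'"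
    using signed_perms_inv_apply[OF even_signed_perms_signed_perms[OF h(1)]] h h'
    by (metis comp_apply g_def)+
  hence "inv g x' = x" "inv g y' = y" using signed_perms_inv_apply[OF signed] by metis+
  have "bij_betw (\<lambda>p. g \<circ> p) (pair_fiber n u v (x, y)) (pair_fiber n u v (x', y'))"
  proof (rule bij_betw_byWitness[where f'="\<lambda>p. inv g \<circ> p"])
    show "\<forall>p\<in>pair_fiber n u v (x, y). inv g \<circ> (g \<circ> p) = p"
      using signed_perms_inv_apply[OF signed] by (auto simp: fun_eq_iff)
    show "\<forall>p\<in>pair_fiber n u v (x', y'). g \<circ> (inv g \<circ> p) = p"
      using signed_perms_apply_inv[OF signed] by (auto simp: fun_eq_iff)
    show "(\<lambda>p. g \<circ> p) ` pair_fiber n u v (x, y) \<subseteq> pair_fiber n u v (x', y')"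
      using g \<open>g x = x'\<close> \<open>g y = y'\<close> by (auto simp: pair_fiber_def intro: even_signed_perms_comp)
    show "(\<lambda>p. inv g \<circ> p) ` pair_fiber n u v (x', y') \<subseteq> pair_fiber n u v (x, y)"
      using even_signed_perms_inv[OF g] \<open>inv g x' = x\<close> \<open>inv g y' = y\<close>
      by (auto simp: pair_fiber_def intro: even_signed_perms_comp)
  qed
  thus ?thesis by (rule bij_betw_same_card)
qed

lemma sum_card_pair_fiber:
  assumes "u \<in> signed_points n" "v \<in> signed_points n" "u \<noteq> v" "u \<noteq> -v"
  shows "(\<Sum>t\<in>point_pairs n. card (pair_fiber n u v t)) = card (even_signed_perms n)"
proof -
  have "(\<lambda>p. (p u, p v)) ` even_signed_perms n \<subseteq> point_pairs n"
  proof clarify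
    fix p assume "p \<in> even_signed_perms n"
    hence signed: "p \<in> signed_perms n" by (rule even_signed_perms_signed_perms)
    have "p u \<noteq> p v" "p u \<noteq> - p v"
      using assms(3,4) signed_perms_eq_iff[OF signed] signed_perms_minus[OF signed] by metis+
    thus "(p u, p v) \<in> point_pairs n"
      using assms(1,2) signed_perms_in_points[OF signed] by (auto simp: point_pairs_def)
  qed
  from sum.group[OF finite_even_signed_perms finite_point_pairs this, of "\<lambda>_. 1::nat"]
  show ?thesis by (simp add: pair_fiber_def)
qed

lemma card_pair_fiber:
  assumes n: "3 \<le> n" and uv: "u \<in> signed_points n" "v \<in> signed_points n" "u \<noteq> v" "u \<noteq> -v"
    and t: "t \<in> point_pairs n"
  shows "card (even_signed_perms n) = 2 * n * (2 * n - 2) * card (pair_fiber n u v t)"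
proof -
  have "card (pair_fiber n u v t') = card (pair_fiber n u v t)" if "t' \<in> point_pairs n" for t'
    using card_pair_fiber_eq[OF n] that t by (metis prod.exhaust)
  hence "(\<Sum>t'\<in>point_pairs n. card (pair_fiber n u v t')) = card (point_pairs n) * card (pair_fiber n u v t)"
    by simp
  thus ?thesis using sum_card_pair_fiber[OF uv] card_point_pairs by simp
qed

text \<open>The critical permutations for (i, j) form the four fibres over \<plusminus>(l_j, j+1) and
  \<plusminus>(j+1, l_j) of pi \<mapsto> (pi(l_i), pi(i+1)).\<close>

lemma card_critical_perms:
  assumes n: "3 \<le> n" and i: "0 \<le> i" "i < int n" and j: "0 \<le> j" "j < int n"
  shows "card (even_signed_perms n) = n * (n - 1) * card (critical_perms n i j)"
proof -
  define u where "u = left_pos i"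
  define v where "v = i + 1"
  define B where "B = {(left_pos j, j + 1), (j + 1, left_pos j), (- left_pos j, -(j + 1)), (-(j + 1), - left_pos j)}"
  have critical_iff: "critical_pair j x y \<longleftrightarrow> (x, y) \<in> B" for x y
    by (auto simp: critical_pair_def B_def doubleton_eq_iff)
  have uv: "u \<in> signed_points n" "v \<in> signed_points n" "u \<noteq> v" "u \<noteq> -v"
    using i n by (auto simp: u_def v_def left_pos_def signed_points_def)
  have B_pairs: "B \<subseteq> point_pairs n"
    using j n by (auto simp: B_def point_pairs_def signed_points_def left_pos_def)
  have card_B: "card B = 4"
    using j by (auto simp: B_def left_pos_def)
  have "(\<lambda>p. (p u, p v)) ` critical_perms n i j \<subseteq> B"
    by (auto simp: critical_perms_def critical_iff u_def v_def)
  from sum.group[OF _ _ this, of "\<lambda>_. 1::nat"]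
  have "card (critical_perms n i j) = (\<Sum>t\<in>B. card {p \<in> critical_perms n i j. (p u, p v) = t})"
    using finite_even_signed_perms by (simp add: B_def critical_perms_def)
  also have "\<dots> = (\<Sum>t\<in>B. card (pair_fiber n u v (left_pos j, j + 1)))"
  proof (intro sum.cong refl)
    fix t assume t: "t \<in> B"
    hence "{p \<in> critical_perms n i j. (p u, p v) = t} = pair_fiber n u v t"
      by (auto simp: critical_perms_def pair_fiber_def critical_iff u_def v_def)
    also have "card \<dots> = card (pair_fiber n u v (left_pos j, j + 1))"
      using t B_pairs card_pair_fiber_eq[OF n] by (metis B_def insertI1 prod.exhaust subsetD)
    finally show "card {p \<in> critical_perms n i j. (p u, p v) = t} = \<dots>" .
  qed
  moreover have "card (even_signed_perms n) = 2 * n * (2 * n - 2) * card (pair_fiber n u v (left_pos j, j + 1))"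
    using card_pair_fiber[OF n uv] B_pairs by (simp add: B_def)
  moreover have "2 * n * (2 * n - 2) = n * (n - 1) * 4"
    by (cases n) (simp_all add: algebra_simps)
  ultimately show ?thesis using card_B by simp
qed

lemma even_signed_perms_two_cases:
  assumes "p \<in> even_signed_perms 2"
  shows "(p 1 = 1 \<and> p 2 = 2) \<or> (p 1 = 2 \<and> p 2 = 1) \<or> (p 1 = -1 \<and> p 2 = -2) \<or> (p 1 = -2 \<and> p 2 = -1)"
proof -
  have signed: "p \<in> signed_perms 2" using even_signed_perms_signed_perms[OF assms] .
  have "p 1 \<in> signed_points 2" "p 2 \<in> signed_points 2"
    using signed_perms_in_points[OF signed] by (auto simp: signed_points_def)
  hence "p 1 \<in> {-2, -1, 1, 2}" "p 2 \<in> {-2, -1, 1, 2}" by (auto simp: signed_points_def)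
  moreover have "p 1 \<noteq> p 2" using signed_perms_eq_iff[OF signed, of 1 2] by simp
  moreover have "p 1 \<noteq> - p 2"
    using signed_perms_eq_iff[OF signed, of 1 "-2"] signed_perms_minus[OF signed, of 2] by simp
  moreover have "{1..2::int} = {1, 2}" by auto
  hence "sgn (p 1) * sgn (p 2) = 1"
    using assms by (simp add: even_signed_perms_iff sign_prod_def)
  ultimately show ?thesis by (auto simp: sgn_if)
qed

lemma critical_perms_two:
  "critical_perms 2 0 0 = even_signed_perms 2" "critical_perms 2 0 1 = {}"
  "critical_perms 2 1 0 = {}" "critical_perms 2 1 1 = even_signed_perms 2"
proof -
  have "critical_pair 0 (p (left_pos 0)) (p 1) \<and> \<not> critical_pair 1 (p (left_pos 0)) (p 1)
    \<and> \<not> critical_pair 0 (p (left_pos 1)) (p 2) \<and> critical_pair 1 (p (left_pos 1)) (p 2)"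
    if "p \<in> even_signed_perms 2" for p
  proof -
    have "p (left_pos 0) = - p 2" "left_pos 1 = 1"
      using signed_perms_minus[OF even_signed_perms_signed_perms[OF that], of 2]
      by (simp_all add: left_pos_def)
    thus ?thesis
      using even_signed_perms_two_cases[OF that]
      unfolding critical_pair_zero critical_pair_pos[of 1, simplified] by auto
  qed
  thus "critical_perms 2 0 0 = even_signed_perms 2" "critical_perms 2 0 1 = {}"
    "critical_perms 2 1 0 = {}" "critical_perms 2 1 1 = even_signed_perms 2"
    by (auto simp: critical_perms_def)
qed

lemma sum_card_critical_perms:
  assumes "2 \<le> n"
  shows "(\<Sum>i\<in>{0..<int n}. \<Sum>j\<in>{0..<int n}. real (card (critical_perms n i j)))
    = real n * real (card (even_signed_perms n)) / (real n - 1)"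
proof (cases "n = 2")
  case True
  have "{0..<int 2} = {0, 1}" by auto
  thus ?thesis by (simp add: True critical_perms_two)
next
  case False
  hence n: "3 \<le> n" using assms by simp
  have "real (card (critical_perms n i j)) = real (card (even_signed_perms n)) / (real n * (real n - 1))"
    if "i \<in> {0..<int n}" "j \<in> {0..<int n}" for i j
    using card_critical_perms[OF n, of i j] that n by (simp add: of_nat_diff field_simps)
  hence "(\<Sum>i\<in>{0..<int n}. \<Sum>j\<in>{0..<int n}. real (card (critical_perms n i j)))
      = real n * real n * (real (card (even_signed_perms n)) / (real n * (real n - 1)))"
    by simp
  also have "\<dots> = real n * real (card (even_signed_perms n)) / (real n - 1)"
    using n by (simp add: field_simps)
  finally show ?thesis .
qed

section \<open>Moments\<close>

lemma unif_expect_add: "unif_expect A (\<lambda>x. f x + g x) = unif_expect A f + unif_expect A g"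
  by (simp add: unif_expect_def sum.distrib add_divide_distrib)

lemma unif_expect_cmult: "unif_expect A (\<lambda>x. c * f x) = c * unif_expect A f"
  by (simp add: unif_expect_def sum_distrib_left)

lemma unif_expect_reindex:
  "bij_betw h A A \<Longrightarrow> unif_expect A (\<lambda>x. f (h x)) = unif_expect A f"
  using sum.reindex_bij_betw by (simp add: unif_expect_def) blast

lemma unif_var_reindex:
  "bij_betw h A A \<Longrightarrow> unif_var A (\<lambda>x. f (h x)) = unif_var A f"
  unfolding unif_var_def by (simp add: unif_expect_reindex[where f = "\<lambda>x. (f x - unif_expect A f)^2"]
    unif_expect_reindex[where f = f])

lemma unif_var_eq: "unif_var A f = unif_expect A (\<lambda>x. (f x)^2) - (unif_expect A f)^2"
proof (cases "finite A \<and> A \<noteq> {}")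
  case True
  define m where "m = unif_expect A f"
  have square: "(\<lambda>x. (f x - m)^2) = (\<lambda>x. (f x)^2 + (-2 * m) * f x + m^2)"
    by (simp add: fun_eq_iff power2_diff)
  have "unif_var A f = unif_expect A (\<lambda>x. (f x)^2 + (-2 * m) * f x + m^2)"
    unfolding unif_var_def m_def[symmetric] square ..
  also have "\<dots> = unif_expect A (\<lambda>x. (f x)^2) + (-2 * m) * m + m^2"
    using True by (simp only: unif_expect_add unif_expect_cmult flip: m_def) (simp add: unif_expect_def)
  finally show ?thesis by (simp add: m_def power2_eq_square)
next
  case False
  thus ?thesis by (auto simp: unif_var_def unif_expect_def)
qed

lemma unif_var_add:
  "unif_var A (\<lambda>x. f x + g x) = unif_var A f + unif_var A g
    + 2 * (unif_expect A (\<lambda>x. f x * g x) - unif_expect A f * unif_expect A g)"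
proof -
  have "unif_expect A (\<lambda>x. (f x + g x)^2)
      = unif_expect A (\<lambda>x. (f x)^2) + unif_expect A (\<lambda>x. (g x)^2) + 2 * unif_expect A (\<lambda>x. f x * g x)"
    by (simp add: power2_sum unif_expect_add unif_expect_cmult[symmetric] mult.assoc)
  thus ?thesis by (simp add: unif_var_eq unif_expect_add power2_sum)
qed

lemma bij_betw_inv_even_signed_perms: "bij_betw inv (even_signed_perms n) (even_signed_perms n)"
  by (rule involution_bij_betw)
    (auto simp: even_signed_perms_inv inv_inv_eq[OF signed_perms_bij[OF even_signed_perms_signed_perms]])

lemma unif_expect_desD:
  assumes "2 \<le> n"
  shows "unif_expect (even_signed_perms n) (\<lambda>p. real (desD n p)) = real n / 2"
proof -
  define G where "G = even_signed_perms n"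
  have "(\<Sum>p\<in>G. real (desD n p)) = (\<Sum>p\<in>G. \<Sum>i\<in>{0..<int n}. desc_ind p i)"
    using desD_eq_sum_desc_ind even_signed_perms_signed_perms by (auto simp: G_def intro: sum.cong)
  also have "\<dots> = (\<Sum>i\<in>{0..<int n}. \<Sum>p\<in>G. desc_ind p i)" by (rule sum.swap)
  also have "\<dots> = (\<Sum>i\<in>{0..<int n}. real (card G) / 2)"
    by (intro sum.cong refl) (simp add: G_def sum_desc_ind[OF assms])
  finally have "(\<Sum>p\<in>G. real (desD n p)) = real n * real (card G) / 2" by simp
  moreover have "card G > 0"
    using finite_even_signed_perms id_even_signed_perms by (auto simp: G_def card_gt_0_iff)
  ultimately show ?thesis by (simp add: G_def unif_expect_def)
qed

lemma unif_expect_desD_mult_idesD: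
  assumes "2 \<le> n"
  shows "unif_expect (even_signed_perms n) (\<lambda>p. real (desD n p) * real (idesD n p))
    = real n ^ 2 / 4 + real n / (4 * (real n - 1))"
proof -
  define G where "G = even_signed_perms n"
  define N where "N = real (card G)"
  have "(\<Sum>p\<in>G. real (desD n p) * real (idesD n p))
      = (\<Sum>p\<in>G. \<Sum>i\<in>{0..<int n}. \<Sum>j\<in>{0..<int n}. desc_ind p i * desc_ind (inv p) j)"
    using desD_eq_sum_desc_ind even_signed_perms_signed_perms signed_perms_inv
    by (auto simp: G_def idesD_def sum_product intro!: sum.cong)
  also have "\<dots> = (\<Sum>i\<in>{0..<int n}. \<Sum>j\<in>{0..<int n}. \<Sum>p\<in>G. desc_ind p i * desc_ind (inv p) j)"
    by (simp add: sum.swap[of _ G])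
  also have "\<dots> = (\<Sum>i\<in>{0..<int n}. \<Sum>j\<in>{0..<int n}. N / 4 + real (card (critical_perms n i j)) / 4)"
    by (intro sum.cong refl) (simp add: G_def N_def sum_desc_ind_mult_inv[OF assms])
  also have "\<dots> = real n ^ 2 * N / 4 + real n * N / (4 * (real n - 1))"
    using sum_card_critical_perms[OF assms]
    by (simp add: G_def N_def sum.distrib sum_divide_distrib[symmetric] power2_eq_square)
      (simp add: algebra_simps)
  finally have "(\<Sum>p\<in>G. real (desD n p) * real (idesD n p)) = \<dots>" .
  moreover have "N > 0"
    using finite_even_signed_perms id_even_signed_perms by (auto simp: G_def N_def card_gt_0_iff)
  ultimately show ?thesis by (simp add: G_def N_def unif_expect_def field_simps)
qed

theorem proposition5p8:
  fixes n :: nat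
  assumes "n \<ge> 2"
  shows "unif_expect (even_signed_perms n) (\<lambda>\<pi>. real (desD n \<pi> + idesD n \<pi>)) = real n
    \<and> unif_var (even_signed_perms n) (\<lambda>\<pi>. real (desD n \<pi> + idesD n \<pi>))
        = 2 * unif_var (even_signed_perms n) (\<lambda>\<pi>. real (desD n \<pi>)) + real n / (2 * real n - 2)"
proof -
  define G where "G = even_signed_perms n"
  define d where "d = (\<lambda>\<pi>. real (desD n \<pi>))"
  have sum_eq: "(\<lambda>\<pi>. real (desD n \<pi> + idesD n \<pi>)) = (\<lambda>\<pi>. d \<pi> + d (inv \<pi>))"
    by (simp add: d_def idesD_def fun_eq_iff)
  have E_d: "unif_expect G d = real n / 2"
    using unif_expect_desD[OF assms] by (simp add: G_def d_def)
  have E_ides: "unif_expect G (\<lambda>\<pi>. d (inv \<pi>)) = real n / 2"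
    using unif_expect_reindex[OF bij_betw_inv_even_signed_perms] E_d by (simp add: G_def)
  have V_ides: "unif_var G (\<lambda>\<pi>. d (inv \<pi>)) = unif_var G d"
    using unif_var_reindex[OF bij_betw_inv_even_signed_perms] by (simp add: G_def)
  have E_mixed: "unif_expect G (\<lambda>\<pi>. d \<pi> * d (inv \<pi>)) = real n ^ 2 / 4 + real n / (4 * (real n - 1))"
    using unif_expect_desD_mult_idesD[OF assms] by (simp add: G_def d_def idesD_def)
  have "real n - 1 > 0" using assms by simp
  thus ?thesis
    unfolding sum_eq G_def[symmetric] d_def[symmetric] unif_expect_add unif_var_add E_d E_ides
      V_ides E_mixed
    by (simp add: power2_eq_square field_simps)
qed
end
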